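(* Let $\Gamma$ be a simple, undirected, connected graph with order $p\ge 2$, maximum degree $\Delta$ and domination number $\gamma(\Gamma)$. Then $$\gamma_{[3R]}(\Gamma)\ge\left\lceil\frac{2p+(\Delta-1)\gamma(\Gamma)}{\Delta}\right\rceil.$$ Moreover, this bound holds with equality for every such graph having a vertex adjacent to all other vertices.
   Context: $\gamma(\Gamma)$ is the minimum size of a set $S$ of vertices such that every vertex outside $S$ has a neighbour in $S$. For $h:V\to\{0,1,2,3,4\}$, let $AN(v)=\{w\in N(v):h(w)\ge 1\}$, $AN[v]=AN(v)\cup\{v\}$ and $h(S)=\sum_{u\in S}h(u)$; $h$ is a triple Roman dominating function (3RDF) if every $v$ with $h(v)<3$ satisfies $h(AN[v])\ge|AN(v)|+3$, and $\gamma_{[3R]}(\Gamma)$ is the minimum weight $h(V)$ of a 3RDF. *)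

theory Defs
  imports Main Complex_Main
begin

definition simple_graph :: "'a set \<Rightarrow> ('a \<Rightarrow> 'a \<Rightarrow> bool) \<Rightarrow> bool" where
  "simple_graph V E \<longleftrightarrow> finite V
     \<and> (\<forall>u v. E u v \<longrightarrow> u \<in> V \<and> v \<in> V)
     \<and> (\<forall>u v. E u v \<longrightarrow> E v u)
     \<and> (\<forall>v. \<not> E v v)"

definition connected_graph :: "'a set \<Rightarrow> ('a \<Rightarrow> 'a \<Rightarrow> bool) \<Rightarrow> bool" where
  "connected_graph V E \<longleftrightarrow> (\<forall>u\<in>V. \<forall>v\<in>V. E\<^sup>*\<^sup>* u v)"

definition nbhd :: "'a set \<Rightarrow> ('a \<Rightarrow> 'a \<Rightarrow> bool) \<Rightarrow> 'a \<Rightarrow> 'a set" where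
  "nbhd V E v = {w \<in> V. E v w}"

definition degree :: "'a set \<Rightarrow> ('a \<Rightarrow> 'a \<Rightarrow> bool) \<Rightarrow> 'a \<Rightarrow> nat" where
  "degree V E v = card (nbhd V E v)"

definition max_degree :: "'a set \<Rightarrow> ('a \<Rightarrow> 'a \<Rightarrow> bool) \<Rightarrow> nat" where
  "max_degree V E = Max (degree V E ` V)"

definition dominating_set :: "'a set \<Rightarrow> ('a \<Rightarrow> 'a \<Rightarrow> bool) \<Rightarrow> 'a set \<Rightarrow> bool" where
  "dominating_set V E S \<longleftrightarrow> S \<subseteq> V \<and> (\<forall>v \<in> V - S. \<exists>u \<in> S. E v u)"

definition domination_number :: "'a set \<Rightarrow> ('a \<Rightarrow> 'a \<Rightarrow> bool) \<Rightarrow> nat" where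
  "domination_number V E = Min (card ` {S. dominating_set V E S})"

definition active_nbhd :: "'a set \<Rightarrow> ('a \<Rightarrow> 'a \<Rightarrow> bool) \<Rightarrow> ('a \<Rightarrow> nat) \<Rightarrow> 'a \<Rightarrow> 'a set" where
  "active_nbhd V E h v = {w \<in> nbhd V E v. h w \<ge> 1}"

definition triple_roman_dom :: "'a set \<Rightarrow> ('a \<Rightarrow> 'a \<Rightarrow> bool) \<Rightarrow> ('a \<Rightarrow> nat) \<Rightarrow> bool" where
  "triple_roman_dom V E h \<longleftrightarrow>
     (\<forall>v \<in> V. h v \<le> 4) \<and> (\<forall>v. v \<notin> V \<longrightarrow> h v = 0) \<and>
     (\<forall>v \<in> V. h v < 3 \<longrightarrow>
        sum h (insert v (active_nbhd V E h v)) \<ge> card (active_nbhd V E h v) + 3)"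

definition weight :: "'a set \<Rightarrow> ('a \<Rightarrow> nat) \<Rightarrow> nat" where
  "weight V h = sum h V"

definition triple_roman_dom_number :: "'a set \<Rightarrow> ('a \<Rightarrow> 'a \<Rightarrow> bool) \<Rightarrow> nat" where
  "triple_roman_dom_number V E = Min (weight V ` {h. triple_roman_dom V E h})"

end

theory Submission
  imports Defs
begin

(*
  Let h be a triple Roman dominating function of weight w on a graph with p vertices and
  maximum degree Delta, and let S be the set of vertices where h is positive; S is dominating,
  so |S| >= gamma. Every vertex v with h v < 3 has excess h v + sum_{u in N(v)} (h u - 1) >= 3,
  and summing the excesses over all v counts each term h u - 1 at most Delta times. Adding,
  vertex by vertex, two thirds of this estimate to one third of the trivial count Delta * w
  (vertices with h v = 3 are where Delta >= 2 is needed) gives Delta * w >= 2p + (Delta - 1)|S|.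
  The only connected graph with Delta = 1 and p >= 2 is K2, where the bound reads w >= 4.
  With a universal vertex, Delta = p - 1 and gamma = 1, and putting 4 on that vertex gives
  w = 4 = ceil((3p - 2)/(p - 1)).
*)

lemma simple_graph_finite: "simple_graph V E \<Longrightarrow> finite V"
  by (simp add: simple_graph_def)

lemma simple_graph_edge_in: "simple_graph V E \<Longrightarrow> E u v \<Longrightarrow> u \<in> V \<and> v \<in> V"
  by (simp add: simple_graph_def)

lemma simple_graph_sym: "simple_graph V E \<Longrightarrow> E u v \<Longrightarrow> E v u"
  by (simp add: simple_graph_def)

lemma simple_graph_irrefl: "simple_graph V E \<Longrightarrow> \<not> E v v"
  by (simp add: simple_graph_def)

lemma nbhd_subset: "nbhd V E v \<subseteq> V"
  by (auto simp: nbhd_def)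

lemma finite_nbhd: "finite V \<Longrightarrow> finite (nbhd V E v)"
  using finite_subset[OF nbhd_subset] .

lemma active_nbhd_subset: "active_nbhd V E h v \<subseteq> nbhd V E v"
  by (auto simp: active_nbhd_def)

lemma degree_le_max_degree: "finite V \<Longrightarrow> v \<in> V \<Longrightarrow> degree V E v \<le> max_degree V E"
  by (simp add: max_degree_def)

lemma degree_le_card_minus_one:
  assumes "simple_graph V E" and "v \<in> V"
  shows "degree V E v \<le> card V - 1"
proof -
  have "nbhd V E v \<subseteq> V - {v}"
    using simple_graph_irrefl[OF assms(1)] by (auto simp: nbhd_def)
  then have "card (nbhd V E v) \<le> card (V - {v})"
    using simple_graph_finite[OF assms(1)] by (intro card_mono) auto
  then show ?thesis
    using assms by (simp add: degree_def simple_graph_finite)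
qed

lemma max_degree_universal_vertex:
  assumes G: "simple_graph V E" and "u \<in> V" and "\<forall>v \<in> V - {u}. E u v"
  shows "max_degree V E = card V - 1"
proof -
  have fin: "finite V" using simple_graph_finite[OF G] .
  have "nbhd V E u = V - {u}"
    using assms simple_graph_irrefl[OF G] by (auto simp: nbhd_def)
  then have "degree V E u = card V - 1"
    using fin \<open>u \<in> V\<close> by (simp add: degree_def)
  then show ?thesis
    using fin \<open>u \<in> V\<close> degree_le_card_minus_one[OF G]
    unfolding max_degree_def by (metis Max_eqI finite_imageI imageE imageI)
qed

lemma connected_graph_has_neighbour:
  assumes "connected_graph V E" and "a \<in> V" and "b \<in> V" and "a \<noteq> b"
  shows "\<exists>y. E a y"
proof -
  have "E\<^sup>*\<^sup>* a b" using assms unfolding connected_graph_def by blast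
  then show ?thesis using \<open>a \<noteq> b\<close> by (cases rule: converse_rtranclpE) auto
qed

lemma two_vertices_if_card_ge_2:
  assumes "finite V" and "2 \<le> card V"
  obtains a b where "a \<in> V" and "b \<in> V" and "a \<noteq> b"
  using assms card_le_Suc0_iff_eq[OF assms(1)] by fastforce

lemma max_degree_pos:
  assumes G: "simple_graph V E" and "connected_graph V E" and "2 \<le> card V"
  shows "1 \<le> max_degree V E"
proof -
  have fin: "finite V" using simple_graph_finite[OF G] .
  obtain a b where "a \<in> V" "b \<in> V" "a \<noteq> b"
    using two_vertices_if_card_ge_2[OF fin \<open>2 \<le> card V\<close>] .
  then obtain y where "E a y" using connected_graph_has_neighbour[OF assms(2)] by blast
  then have "y \<in> nbhd V E a" using simple_graph_edge_in[OF G] by (auto simp: nbhd_def)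
  then have "card (nbhd V E a) > 0"
    using finite_nbhd[OF fin] card_gt_0_iff by blast
  then have "1 \<le> degree V E a" by (simp add: degree_def)
  then show ?thesis using degree_le_max_degree[OF fin \<open>a \<in> V\<close>, of E] by simp
qed

lemma connected_max_degree_one_card_le_2:
  assumes G: "simple_graph V E" and C: "connected_graph V E" and "max_degree V E \<le> 1"
  shows "card V \<le> 2"
proof (rule ccontr)
  assume "\<not> card V \<le> 2"
  then have "2 \<le> card V" by simp
  have fin: "finite V" using simple_graph_finite[OF G] .
  obtain a b where a: "a \<in> V" and "b \<in> V" "a \<noteq> b"
    using two_vertices_if_card_ge_2[OF fin \<open>2 \<le> card V\<close>] .
  then obtain y where ay: "E a y" using connected_graph_has_neighbour[OF C] by blast
  have unique: "z = w" if "E x z" and "E x w" for x z w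
  proof -
    have "x \<in> V" and "z \<in> nbhd V E x" and "w \<in> nbhd V E x"
      using that simple_graph_edge_in[OF G] by (auto simp: nbhd_def)
    moreover have "card (nbhd V E x) \<le> 1"
      using degree_le_max_degree[OF fin \<open>x \<in> V\<close>, of E] assms(3) by (simp add: degree_def)
    ultimately show ?thesis
      using finite_nbhd[OF fin] card_le_Suc0_iff_eq by (metis One_nat_def)
  qed
  have "c \<in> {a, y}" if "E\<^sup>*\<^sup>* a c" for c
    using that
  proof (induction rule: rtranclp_induct)
    case (step c d)
    then consider "c = a" | "c = y" by blast
    then show ?case
    proof cases
      case 1
      then show ?thesis using unique[OF ay] step.hyps(2) by blast
    next
      case 2
      then show ?thesis using unique[OF simple_graph_sym[OF G ay]] step.hyps(2) by blast
    qed
  qed simp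
  then have "V \<subseteq> {a, y}" using C a unfolding connected_graph_def by blast
  then have "card V \<le> card {a, y}" by (intro card_mono) auto
  also have "\<dots> \<le> 2" by (simp add: card_insert_if)
  finally show False using \<open>\<not> card V \<le> 2\<close> by simp
qed

lemma sum_sum_nbhd:
  fixes g :: "'a \<Rightarrow> 'b::comm_semiring_1"
  assumes G: "simple_graph V E"
  shows "(\<Sum>v\<in>V. \<Sum>u\<in>nbhd V E v. g u) = (\<Sum>u\<in>V. of_nat (degree V E u) * g u)"
proof -
  have fin: "finite V" using simple_graph_finite[OF G] .
  have sym: "E v u \<longleftrightarrow> E u v" for u v using simple_graph_sym[OF G] by blast
  have "(\<Sum>v\<in>V. \<Sum>u\<in>nbhd V E v. g u) = (\<Sum>v\<in>V. \<Sum>u\<in>V. if E v u then g u else 0)"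
    unfolding nbhd_def by (simp only: sum.inter_filter[OF fin])
  also have "\<dots> = (\<Sum>u\<in>V. \<Sum>v\<in>V. if E u v then g u else 0)"
    by (subst sum.swap) (simp only: sym)
  also have "\<dots> = (\<Sum>u\<in>V. of_nat (degree V E u) * g u)"
    unfolding degree_def nbhd_def by (simp only: sum.inter_filter[OF fin, symmetric] sum_constant)
  finally show ?thesis .
qed

lemma sum_eq_sum_diff_one_plus_card_support:
  fixes h :: "'a \<Rightarrow> nat"
  assumes "finite A"
  shows "sum h A = (\<Sum>a\<in>A. h a - 1) + card {a\<in>A. 1 \<le> h a}"
proof -
  have "sum h A = (\<Sum>a\<in>A. (h a - 1) + of_bool (1 \<le> h a))"
    by (rule sum.cong) auto
  also have "\<dots> = (\<Sum>a\<in>A. h a - 1) + card {a\<in>A. 1 \<le> h a}"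
    using assms by (simp add: sum.distrib Collect_conj_eq Int_commute)
  finally show ?thesis .
qed

lemma triple_roman_domD:
  assumes "triple_roman_dom V E h" and "v \<in> V" and "h v < 3"
  shows "card (active_nbhd V E h v) + 3 \<le> sum h (insert v (active_nbhd V E h v))"
  using assms unfolding triple_roman_dom_def by blast

lemma triple_roman_dom_active_nbhd_nonempty:
  assumes "triple_roman_dom V E h" and "v \<in> V" and "h v < 3"
  shows "active_nbhd V E h v \<noteq> {}"
  using triple_roman_domD[OF assms] \<open>h v < 3\<close> by auto

lemma triple_roman_dom_nbhd_excess:
  assumes G: "simple_graph V E" and h: "triple_roman_dom V E h"
    and "v \<in> V" and "h v < 3"
  shows "3 \<le> h v + (\<Sum>u\<in>nbhd V E v. h u - 1)"
proof -
  define AN where "AN = active_nbhd V E h v"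
  have fin: "finite AN"
    using finite_subset[OF active_nbhd_subset finite_nbhd[OF simple_graph_finite[OF G]]]
    unfolding AN_def .
  have "v \<notin> AN"
    using simple_graph_irrefl[OF G] by (auto simp: AN_def active_nbhd_def nbhd_def)
  have "card AN + 3 \<le> sum h (insert v AN)"
    using triple_roman_domD[OF h \<open>v \<in> V\<close> \<open>h v < 3\<close>] unfolding AN_def .
  also have "\<dots> = h v + (\<Sum>u\<in>AN. h u - 1) + card AN"
    using fin \<open>v \<notin> AN\<close> sum_eq_sum_diff_one_plus_card_support[OF fin, of h]
    by (simp add: AN_def active_nbhd_def)
  also have "(\<Sum>u\<in>AN. h u - 1) = (\<Sum>u\<in>nbhd V E v. h u - 1)"
    \<comment> \<open>truncated subtraction: the inactive neighbours contribute \<open>0 - 1 = 0\<close>\<close>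
    by (rule sum.mono_neutral_left)
      (auto simp: AN_def active_nbhd_def finite_nbhd simple_graph_finite[OF G])
  finally show ?thesis by simp
qed

lemma triple_roman_vertex_charge:
  fixes x f \<Delta> :: nat
  assumes "x \<le> 4" and "2 \<le> \<Delta>" and "x < 3 \<Longrightarrow> 3 \<le> x + f"
  shows "6 \<le> 2 * f + \<Delta> * (x - 1) + 3 * of_bool (1 \<le> x)"
proof -
  consider "x = 0" | "x = 1" | "x = 2" | "x = 3" | "x = 4" using \<open>x \<le> 4\<close> by linarith
  then show ?thesis using assms by cases auto
qed

lemma triple_roman_dom_le_4: "triple_roman_dom V E h \<Longrightarrow> v \<in> V \<Longrightarrow> h v \<le> 4"
  by (simp add: triple_roman_dom_def)

lemma triple_roman_dom_weight_lower_bound: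
  assumes G: "simple_graph V E" and h: "triple_roman_dom V E h"
    and "2 \<le> \<Delta>" and deg: "\<forall>v\<in>V. degree V E v \<le> \<Delta>"
  shows "2 * card V + (\<Delta> - 1) * card {v\<in>V. 1 \<le> h v} \<le> \<Delta> * weight V h"
proof -
  have fin: "finite V" using simple_graph_finite[OF G] .
  define T where "T = (\<Sum>v\<in>V. h v - 1)"
  define s where "s = card {v\<in>V. 1 \<le> h v}"
  define f where "f v = (\<Sum>u\<in>nbhd V E v. h u - 1)" for v
  have "(\<Sum>v\<in>V. f v) = (\<Sum>u\<in>V. degree V E u * (h u - 1))"
    unfolding f_def using sum_sum_nbhd[OF G, of "\<lambda>u. h u - 1"] by simp
  also have "\<dots> \<le> (\<Sum>u\<in>V. \<Delta> * (h u - 1))"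
    using deg by (intro sum_mono mult_right_mono) auto
  finally have excess: "(\<Sum>v\<in>V. f v) \<le> \<Delta> * T"
    unfolding T_def by (simp add: sum_distrib_left)
  have "6 * card V = (\<Sum>v\<in>V. 6)" by simp
  also have "\<dots> \<le> (\<Sum>v\<in>V. 2 * f v + \<Delta> * (h v - 1) + 3 * of_bool (1 \<le> h v))"
  proof (rule sum_mono)
    fix v assume "v \<in> V"
    show "6 \<le> 2 * f v + \<Delta> * (h v - 1) + 3 * of_bool (1 \<le> h v)"
      using triple_roman_dom_le_4[OF h \<open>v \<in> V\<close>] \<open>2 \<le> \<Delta>\<close>
        triple_roman_dom_nbhd_excess[OF G h \<open>v \<in> V\<close>]
      unfolding f_def by (rule triple_roman_vertex_charge)
  qed
  also have "\<dots> = 2 * (\<Sum>v\<in>V. f v) + \<Delta> * T + 3 * s"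
    unfolding T_def s_def using fin
    by (simp add: sum.distrib sum_distrib_left Collect_conj_eq Int_commute)
  finally have "2 * card V \<le> \<Delta> * T + s"
    using excess by linarith
  moreover have "weight V h = T + s"
    unfolding weight_def T_def s_def by (rule sum_eq_sum_diff_one_plus_card_support[OF fin])
  moreover have "\<Delta> * s = (\<Delta> - 1) * s + s"
    using \<open>2 \<le> \<Delta>\<close> by (simp add: algebra_simps diff_mult_distrib)
  ultimately show ?thesis
    unfolding s_def by (simp add: algebra_simps)
qed

lemma triple_roman_dom_support_dominating:
  assumes "triple_roman_dom V E h"
  shows "dominating_set V E {v\<in>V. 1 \<le> h v}"
  unfolding dominating_set_def
proof (intro conjI ballI)
  fix v assume "v \<in> V - {v\<in>V. 1 \<le> h v}"
  then obtain u where "u \<in> active_nbhd V E h v"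
    using triple_roman_dom_active_nbhd_nonempty[OF assms] by fastforce
  then show "\<exists>u\<in>{v\<in>V. 1 \<le> h v}. E v u"
    by (auto simp: active_nbhd_def nbhd_def)
qed auto

lemma triple_roman_dom_weight_ge_4:
  assumes fin: "finite V" and "2 \<le> card V" and h: "triple_roman_dom V E h"
  shows "4 \<le> weight V h"
proof (cases "\<exists>v\<in>V. h v < 3")
  case True
  then obtain v where "v \<in> V" and "h v < 3" by blast
  define AN where "AN = active_nbhd V E h v"
  have "AN \<subseteq> V"
    unfolding AN_def using active_nbhd_subset nbhd_subset by (rule subset_trans)
  have "AN \<noteq> {}"
    using triple_roman_dom_active_nbhd_nonempty[OF h \<open>v \<in> V\<close> \<open>h v < 3\<close>] unfolding AN_def .
  then have "4 \<le> card AN + 3"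
    using finite_subset[OF \<open>AN \<subseteq> V\<close> fin] by (simp add: Suc_le_eq card_gt_0_iff)
  also have "card AN + 3 \<le> sum h (insert v AN)"
    using triple_roman_domD[OF h \<open>v \<in> V\<close> \<open>h v < 3\<close>] unfolding AN_def .
  also have "\<dots> \<le> sum h V"
    using \<open>AN \<subseteq> V\<close> \<open>v \<in> V\<close> by (intro sum_mono2[OF fin]) auto
  finally show ?thesis unfolding weight_def .
next
  case False
  obtain a b where "a \<in> V" and "b \<in> V" and "a \<noteq> b"
    using two_vertices_if_card_ge_2[OF fin \<open>2 \<le> card V\<close>] .
  then have "sum h {a, b} \<le> sum h V" by (intro sum_mono2[OF fin]) auto
  moreover have "3 \<le> h a" and "3 \<le> h b" using False \<open>a \<in> V\<close> \<open>b \<in> V\<close> by auto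
  ultimately show ?thesis using \<open>a \<noteq> b\<close> unfolding weight_def by simp
qed

lemma finite_triple_roman_dom_weights:
  assumes "finite V"
  shows "finite (weight V ` {h. triple_roman_dom V E h})"
proof -
  have "weight V h \<le> 4 * card V" if "triple_roman_dom V E h" for h
  proof -
    have "sum h V \<le> sum (\<lambda>_. 4) V"
      using that by (intro sum_mono) (simp add: triple_roman_dom_le_4)
    then show ?thesis by (simp add: weight_def)
  qed
  then have "weight V ` {h. triple_roman_dom V E h} \<subseteq> {..4 * card V}" by auto
  then show ?thesis using finite_subset by blast
qed

lemma triple_roman_dom_number_le:
  "finite V \<Longrightarrow> triple_roman_dom V E h \<Longrightarrow> triple_roman_dom_number V E \<le> weight V h"
  unfolding triple_roman_dom_number_def
  using finite_triple_roman_dom_weights by (intro Min_le) auto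

lemma triple_roman_dom_number_attained:
  assumes "finite V"
  obtains h where "triple_roman_dom V E h" and "weight V h = triple_roman_dom_number V E"
proof -
  have "triple_roman_dom V E (\<lambda>v. if v \<in> V then 4 else 0)"
    by (simp add: triple_roman_dom_def)
  then have "triple_roman_dom_number V E \<in> weight V ` {h. triple_roman_dom V E h}"
    unfolding triple_roman_dom_number_def
    using finite_triple_roman_dom_weights[OF assms] by (intro Min_in) auto
  then show ?thesis using that by auto
qed

lemma finite_dominating_set_cards:
  "finite V \<Longrightarrow> finite (card ` {S. dominating_set V E S})"
  by (rule finite_subset[of _ "{..card V}"]) (auto simp: dominating_set_def intro: card_mono)

lemma domination_number_le:
  "finite V \<Longrightarrow> dominating_set V E S \<Longrightarrow> domination_number V E \<le> card S"
  unfolding domination_number_def using finite_dominating_set_cards by (intro Min_le) auto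

lemma domination_number_pos:
  assumes "finite V" and "V \<noteq> {}"
  shows "1 \<le> domination_number V E"
proof -
  have "dominating_set V E V" by (simp add: dominating_set_def)
  then have "domination_number V E \<in> card ` {S. dominating_set V E S}"
    unfolding domination_number_def
    using finite_dominating_set_cards[OF assms(1)] by (intro Min_in) auto
  then obtain S where "dominating_set V E S" and "domination_number V E = card S" by auto
  moreover have "S \<noteq> {}" using \<open>dominating_set V E S\<close> \<open>V \<noteq> {}\<close> by (auto simp: dominating_set_def)
  moreover have "finite S"
    using \<open>dominating_set V E S\<close> \<open>finite V\<close> finite_subset by (auto simp: dominating_set_def)
  ultimately show ?thesis by (simp add: Suc_le_eq card_gt_0_iff)
qed

lemma triple_roman_dom_number_lower_bound:
  assumes G: "simple_graph V E" and C: "connected_graph V E" and "2 \<le> card V"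
  shows "2 * card V + (max_degree V E - 1) * domination_number V E
           \<le> max_degree V E * triple_roman_dom_number V E"
proof -
  have fin: "finite V" using simple_graph_finite[OF G] .
  obtain h where h: "triple_roman_dom V E h" and w: "weight V h = triple_roman_dom_number V E"
    using triple_roman_dom_number_attained[OF fin] .
  have "1 \<le> max_degree V E" using max_degree_pos[OF G C \<open>2 \<le> card V\<close>] .
  then consider "2 \<le> max_degree V E" | "max_degree V E = 1" by linarith
  then show ?thesis
  proof cases
    case 1
    have "domination_number V E \<le> card {v\<in>V. 1 \<le> h v}"
      using domination_number_le[OF fin triple_roman_dom_support_dominating[OF h]] .
    then have "(max_degree V E - 1) * domination_number V E
                 \<le> (max_degree V E - 1) * card {v\<in>V. 1 \<le> h v}" by simp
    moreover have "2 * card V + (max_degree V E - 1) * card {v\<in>V. 1 \<le> h v}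
                     \<le> max_degree V E * weight V h"
      using triple_roman_dom_weight_lower_bound[OF G h 1] degree_le_max_degree[OF fin] by blast
    ultimately show ?thesis unfolding w[symmetric] by linarith
  next
    case 2
    then have "card V = 2"
      using connected_max_degree_one_card_le_2[OF G C] \<open>2 \<le> card V\<close> by simp
    then show ?thesis
      using 2 triple_roman_dom_weight_ge_4[OF fin \<open>2 \<le> card V\<close> h] w by simp
  qed
qed

lemma triple_roman_dom_universal_vertex:
  assumes G: "simple_graph V E" and "u \<in> V" and u: "\<forall>v \<in> V - {u}. E u v"
  shows "triple_roman_dom V E (\<lambda>v. if v = u then 4 else 0)"
proof -
  define h :: "'a \<Rightarrow> nat" where "h = (\<lambda>v. if v = u then 4 else 0)"
  have "active_nbhd V E h v = {u}" if "v \<in> V" and "v \<noteq> u" for v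
    using that \<open>u \<in> V\<close> u simple_graph_sym[OF G] by (auto simp: active_nbhd_def nbhd_def h_def)
  then have "triple_roman_dom V E h"
    using \<open>u \<in> V\<close> by (auto simp: triple_roman_dom_def h_def)
  then show ?thesis unfolding h_def .
qed

lemma triple_roman_dom_number_universal_vertex:
  assumes G: "simple_graph V E" and "2 \<le> card V" and "u \<in> V" and "\<forall>v \<in> V - {u}. E u v"
  shows "triple_roman_dom_number V E = 4"
proof -
  have fin: "finite V" using simple_graph_finite[OF G] .
  have "weight V (\<lambda>v. if v = u then 4 else 0) = 4"
    using fin \<open>u \<in> V\<close> by (simp add: weight_def)
  then have "triple_roman_dom_number V E \<le> 4"
    using triple_roman_dom_number_le[OF fin triple_roman_dom_universal_vertex[OF assms(1,3,4)]] by simp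
  moreover have "4 \<le> triple_roman_dom_number V E"
    using triple_roman_dom_number_attained[OF fin] triple_roman_dom_weight_ge_4[OF fin \<open>2 \<le> card V\<close>]
    by metis
  ultimately show ?thesis by simp
qed

lemma domination_number_universal_vertex:
  assumes G: "simple_graph V E" and "u \<in> V" and "\<forall>v \<in> V - {u}. E u v"
  shows "domination_number V E = 1"
proof -
  have fin: "finite V" using simple_graph_finite[OF G] .
  have "dominating_set V E {u}"
    using assms simple_graph_sym[OF G] by (auto simp: dominating_set_def)
  then have "domination_number V E \<le> 1" using domination_number_le[OF fin] by fastforce
  moreover have "1 \<le> domination_number V E"
    using domination_number_pos[OF fin] \<open>u \<in> V\<close> by blast
  ultimately show ?thesis by simp
qed

lemma of_int_ceiling_divide_le:
  fixes x :: real and n w :: nat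
  assumes "0 < n" and "x \<le> real n * real w"
  shows "of_int \<lceil>x / real n\<rceil> \<le> real w"
proof -
  have "x / real n \<le> real w" using assms by (simp add: divide_le_eq mult.commute)
  then show ?thesis by (metis ceiling_le_iff ceiling_of_nat of_int_le_iff of_int_of_nat_eq)
qed

lemma ceiling_universal_vertex_bound:
  fixes p :: nat
  assumes "2 \<le> p"
  shows "\<lceil>(2 * real p + (real (p - 1) - 1)) / real (p - 1)\<rceil> = 4"
proof -
  have "(2 * real p + (real (p - 1) - 1)) / real (p - 1) = 3 + 1 / real (p - 1)"
    using assms by (simp add: of_nat_diff field_simps)
  moreover have "0 < 1 / real (p - 1)" and "1 / real (p - 1) \<le> 1" using assms by simp_all
  ultimately show ?thesis by (simp add: ceiling_eq_iff)
qed

theorem proposition19: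
  fixes V :: "'a set" and E :: "'a \<Rightarrow> 'a \<Rightarrow> bool"
  assumes "simple_graph V E" and "connected_graph V E" and "card V \<ge> 2"
  shows "real (triple_roman_dom_number V E) \<ge>
           of_int \<lceil>(2 * real (card V) + (real (max_degree V E) - 1) * real (domination_number V E))
                   / real (max_degree V E)\<rceil>
         \<and> ((\<exists>u \<in> V. \<forall>v \<in> V - {u}. E u v) \<longrightarrow>
         real (triple_roman_dom_number V E) =
           of_int \<lceil>(2 * real (card V) + (real (max_degree V E) - 1) * real (domination_number V E))
                   / real (max_degree V E)\<rceil>)"
proof (intro conjI impI)
  have "1 \<le> max_degree V E" using max_degree_pos[OF assms] .
  moreover have "2 * real (card V) + (real (max_degree V E) - 1) * real (domination_number V E)
      \<le> real (max_degree V E) * real (triple_roman_dom_number V E)"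
  proof -
    have "real (2 * card V + (max_degree V E - 1) * domination_number V E)
        \<le> real (max_degree V E * triple_roman_dom_number V E)"
      using triple_roman_dom_number_lower_bound[OF assms] by (simp only: of_nat_le_iff)
    then show ?thesis using \<open>1 \<le> max_degree V E\<close> by (simp add: of_nat_diff)
  qed
  ultimately show "of_int \<lceil>(2 * real (card V) + (real (max_degree V E) - 1) * real (domination_number V E))
                   / real (max_degree V E)\<rceil> \<le> real (triple_roman_dom_number V E)"
    by (intro of_int_ceiling_divide_le) simp_all
next
  assume "\<exists>u \<in> V. \<forall>v \<in> V - {u}. E u v"
  then obtain u where "u \<in> V" and u: "\<forall>v \<in> V - {u}. E u v" by blast
  have "max_degree V E = card V - 1" "domination_number V E = 1" "triple_roman_dom_number V E = 4"
    using max_degree_universal_vertex[OF assms(1) \<open>u \<in> V\<close> u]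
      domination_number_universal_vertex[OF assms(1) \<open>u \<in> V\<close> u]
      triple_roman_dom_number_universal_vertex[OF assms(1,3) \<open>u \<in> V\<close> u] .
  then show "real (triple_roman_dom_number V E) =
           of_int \<lceil>(2 * real (card V) + (real (max_degree V E) - 1) * real (domination_number V E))
                   / real (max_degree V E)\<rceil>"
    using ceiling_universal_vertex_bound[OF assms(3)] by simp
qed

end
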